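(* If $A\in\{0,1\}^{N\times n}$ is such that every row of $A$ has at most $k$ nonzero entries, then $\mathsf{m}^{rd}(2k+1,A)\ge(2n)^{-2k}(2k)^{-1/4}$.
   Context: For $A\in\{0,1\}^{N\times n}$ and $m\ge0$, unit vectors $U_1,\dots,U_N,V_1,\dots,V_n\in\mathbb{R}^d$ form a margin-$m$, relative-bias-$0$ embedding of $A$ in dimension $d$ if $\langle U_j,V_i\rangle\ge m$ whenever $A_{ji}=1$ and $\langle U_j,V_i\rangle\le -m$ whenever $A_{ji}=0$. $\mathsf{m}^{rd}(d,A)$ is the supremum of $m\ge0$ for which such an embedding exists in dimension $d$ ($-\infty$ if none exists). *)

theory Defs
  imports "HOL-Analysis.Analysis" "HOL-Library.Extended_Real"
begin

text \<open>Vectors in R^d are represented as functions nat => real, only the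
coordinates below d being relevant.\<close>

definition vinner :: "nat \<Rightarrow> (nat \<Rightarrow> real) \<Rightarrow> (nat \<Rightarrow> real) \<Rightarrow> real" where
  "vinner d x y = (\<Sum>t<d. x t * y t)"

definition unit_vec :: "nat \<Rightarrow> (nat \<Rightarrow> real) \<Rightarrow> bool" where
  "unit_vec d x \<longleftrightarrow> vinner d x x = 1"

definition rd_embedding ::
  "nat \<Rightarrow> nat \<Rightarrow> nat \<Rightarrow> (nat \<Rightarrow> nat \<Rightarrow> int) \<Rightarrow> real
     \<Rightarrow> (nat \<Rightarrow> nat \<Rightarrow> real) \<Rightarrow> (nat \<Rightarrow> nat \<Rightarrow> real) \<Rightarrow> bool" where
  "rd_embedding d N n A m U V \<longleftrightarrow>
     (\<forall>j<N. unit_vec d (U j)) \<and> (\<forall>i<n. unit_vec d (V i)) \<and>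
     (\<forall>j<N. \<forall>i<n. (A j i = 1 \<longrightarrow> vinner d (U j) (V i) \<ge> m) \<and>
                   (A j i = 0 \<longrightarrow> vinner d (U j) (V i) \<le> - m))"

definition margins_rd :: "nat \<Rightarrow> nat \<Rightarrow> nat \<Rightarrow> (nat \<Rightarrow> nat \<Rightarrow> int) \<Rightarrow> real set" where
  "margins_rd d N n A = {m. m \<ge> 0 \<and> (\<exists>U V. rd_embedding d N n A m U V)}"

definition mrd :: "nat \<Rightarrow> nat \<Rightarrow> nat \<Rightarrow> (nat \<Rightarrow> nat \<Rightarrow> int) \<Rightarrow> ereal" where
  "mrd d N n A = (if margins_rd d N n A = {} then -\<infinity> else Sup (ereal ` margins_rd d N n A))"

end

theory Submission
  imports Defs "HOL-Computational_Algebra.Polynomial"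
begin

(* Row j is encoded by the coefficient vector of p_j = c - q_j^2, a polynomial of degree at most
   2k, where q_j is the monic polynomial whose roots are the grid points t_i = -1 + 2i/n with
   A_ji = 1; column i is encoded by the moment vector (1, t_i, ..., t_i^2k).  Their inner product
   is p_j(t_i), which is c on the support of row j and at most -c elsewhere, since distinct grid
   points are 2/n apart and hence |q_j(t_i)| >= (2/n)^k.  After normalisation the margin is
   c / ((c + 4^k) sqrt(2k + 1)): the coefficient vector is bounded by its l1 norm, at most
   c + 4^k, and the moment vector by sqrt(2k + 1).  With c = (2/n)^2k / 2 this is at least
   (2n)^-2k.  A single
   column is handled by constant polynomials. *)

definition poly_l1_norm :: "'a::linordered_idom poly \<Rightarrow> 'a" where
  "poly_l1_norm p = (\<Sum>i\<le>degree p. \<bar>coeff p i\<bar>)"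

lemma poly_l1_norm_conv_sum:
  "degree p \<le> D \<Longrightarrow> poly_l1_norm p = (\<Sum>i\<le>D. \<bar>coeff p i\<bar>)"
  unfolding poly_l1_norm_def by (rule sum.mono_neutral_left) (auto simp: coeff_eq_0)

lemma poly_l1_norm_nonneg: "0 \<le> poly_l1_norm p"
  unfolding poly_l1_norm_def by (auto intro: sum_nonneg)

lemma poly_l1_norm_0 [simp]: "poly_l1_norm 0 = 0"
  by (simp add: poly_l1_norm_def)

lemma poly_l1_norm_uminus [simp]: "poly_l1_norm (- p) = poly_l1_norm p"
  unfolding poly_l1_norm_def by simp

lemma poly_l1_norm_smult [simp]: "poly_l1_norm (smult a p) = \<bar>a\<bar> * poly_l1_norm p"
  using poly_l1_norm_conv_sum[of "smult a p" "degree p"] degree_smult_le[of a p]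
  by (simp add: poly_l1_norm_def sum_distrib_left abs_mult)

lemma poly_l1_norm_pCons [simp]: "poly_l1_norm (pCons a p) = \<bar>a\<bar> + poly_l1_norm p"
proof -
  have "poly_l1_norm (pCons a p) = (\<Sum>i\<le>Suc (degree p). \<bar>coeff (pCons a p) i\<bar>)"
    by (rule poly_l1_norm_conv_sum) (simp add: degree_pCons_le)
  also have "\<dots> = \<bar>a\<bar> + poly_l1_norm p"
    by (subst sum.atMost_Suc_shift) (simp add: poly_l1_norm_def)
  finally show ?thesis .
qed

lemma poly_l1_norm_add_le: "poly_l1_norm (p + q) \<le> poly_l1_norm p + poly_l1_norm q"
proof -
  let ?D = "max (degree p) (degree q)"
  have "poly_l1_norm (p + q) = (\<Sum>i\<le>?D. \<bar>coeff p i + coeff q i\<bar>)"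
    using poly_l1_norm_conv_sum[of "p + q" ?D] degree_add_le[of p ?D q] by simp
  also have "\<dots> \<le> (\<Sum>i\<le>?D. \<bar>coeff p i\<bar> + \<bar>coeff q i\<bar>)"
    by (intro sum_mono abs_triangle_ineq)
  also have "\<dots> = poly_l1_norm p + poly_l1_norm q"
    by (simp add: sum.distrib poly_l1_norm_conv_sum[of p ?D] poly_l1_norm_conv_sum[of q ?D])
  finally show ?thesis .
qed

lemma poly_l1_norm_diff_le: "poly_l1_norm (p - q) \<le> poly_l1_norm p + poly_l1_norm q"
  using poly_l1_norm_add_le[of p "- q"] by simp

lemma poly_l1_norm_mult_le: "poly_l1_norm (p * q) \<le> poly_l1_norm p * poly_l1_norm q"
proof (induction p rule: pCons_induct)
  case 0
  then show ?case by (simp add: poly_l1_norm_def)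
next
  case (pCons a p)
  have "poly_l1_norm (pCons a p * q) \<le> poly_l1_norm (smult a q) + poly_l1_norm (pCons 0 (p * q))"
    using poly_l1_norm_add_le[of "smult a q" "pCons 0 (p * q)"] by simp
  also have "\<dots> \<le> \<bar>a\<bar> * poly_l1_norm q + poly_l1_norm p * poly_l1_norm q"
    using pCons.IH by simp
  also have "\<dots> = poly_l1_norm (pCons a p) * poly_l1_norm q"
    by (simp add: algebra_simps)
  finally show ?case .
qed

lemma poly_l1_norm_prod_le:
  "poly_l1_norm (\<Prod>i\<in>S. f i) \<le> (\<Prod>i\<in>S. poly_l1_norm (f i))"
proof (induction S rule: infinite_finite_induct)
  case (insert x F)
  have "poly_l1_norm (\<Prod>i\<in>insert x F. f i) \<le> poly_l1_norm (f x) * poly_l1_norm (\<Prod>i\<in>F. f i)"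
    using insert.hyps poly_l1_norm_mult_le by simp
  also have "\<dots> \<le> poly_l1_norm (f x) * (\<Prod>i\<in>F. poly_l1_norm (f i))"
    using insert.IH by (intro mult_left_mono poly_l1_norm_nonneg)
  finally show ?case using insert.hyps by simp
qed (simp_all add: poly_l1_norm_def)

definition vnorm :: "nat \<Rightarrow> (nat \<Rightarrow> real) \<Rightarrow> real" where
  "vnorm d x = sqrt (vinner d x x)"

definition vnormalize :: "nat \<Rightarrow> (nat \<Rightarrow> real) \<Rightarrow> nat \<Rightarrow> real" where
  "vnormalize d x = (\<lambda>l. x l / vnorm d x)"

lemma vnorm_nonneg [simp]: "0 \<le> vnorm d x"
  by (simp add: vnorm_def vinner_def sum_nonneg)

lemma vnorm_eq_L2_set: "vnorm d x = L2_set x {..<d}"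
  by (simp add: vnorm_def vinner_def L2_set_def power2_eq_square)

lemma vnorm_pos:
  assumes "l < d" "x l \<noteq> 0"
  shows "0 < vnorm d x"
proof -
  have "L2_set x {..<d} \<noteq> 0"
    using assms by (auto simp: L2_set_eq_0_iff)
  then show ?thesis
    by (simp add: vnorm_eq_L2_set less_le)
qed

lemma vinner_vnormalize:
  "vinner d (vnormalize d x) (vnormalize d y) = vinner d x y / (vnorm d x * vnorm d y)"
  unfolding vinner_def vnormalize_def sum_divide_distrib by simp

lemma unit_vec_vnormalize:
  assumes "0 < vnorm d x"
  shows "unit_vec d (vnormalize d x)"
proof -
  have "0 \<le> vinner d x x"
    by (simp add: vinner_def sum_nonneg)
  then show ?thesis
    using assms by (simp add: unit_vec_def vinner_vnormalize vnorm_def)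
qed

lemma vinner_coeff_powers:
  fixes p :: "real poly"
  assumes "degree p < d"
  shows "vinner d (coeff p) (\<lambda>l. x ^ l) = poly p x"
proof -
  have "vinner d (coeff p) (\<lambda>l. x ^ l) = (\<Sum>l\<le>degree p. coeff p l * x ^ l)"
    unfolding vinner_def
    by (rule sum.mono_neutral_right) (use assms in \<open>auto simp: coeff_eq_0\<close>)
  then show ?thesis
    by (simp add: poly_altdef)
qed

lemma vnorm_coeff_le_poly_l1_norm:
  fixes p :: "real poly"
  assumes "degree p < d"
  shows "vnorm d (coeff p) \<le> poly_l1_norm p"
proof -
  have "vnorm d (coeff p) \<le> (\<Sum>l<d. \<bar>coeff p l\<bar>)"
    unfolding vnorm_eq_L2_set by (rule L2_set_le_sum_abs)
  also have "\<dots> = poly_l1_norm p"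
    using assms poly_l1_norm_conv_sum[of p "d - 1"] by (simp add: lessThan_Suc_atMost [symmetric])
  finally show ?thesis .
qed

lemma vnorm_powers_le:
  fixes x :: real
  assumes "\<bar>x\<bar> \<le> 1"
  shows "vnorm d (\<lambda>l. x ^ l) \<le> sqrt d"
proof -
  have "vnorm d (\<lambda>l. x ^ l) = L2_set (\<lambda>l. \<bar>x\<bar> ^ l) {..<d}"
    by (simp add: vnorm_eq_L2_set L2_set_def flip: power_abs)
  also have "\<dots> \<le> L2_set (\<lambda>_. 1) {..<d}"
    using assms by (intro L2_set_mono) (auto simp: power_le_one)
  finally show ?thesis
    by (simp add: L2_set_constant)
qed

lemma vnorm_coeff_const: "0 < d \<Longrightarrow> vnorm d (coeff [:a:]) = \<bar>a\<bar>"
  by (cases d) (simp_all add: vnorm_def vinner_def sum.lessThan_Suc_shift del: sum.lessThan_Suc)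

lemma vnorm_powers_zero: "0 < d \<Longrightarrow> vnorm d (\<lambda>l. (0::real) ^ l) = 1"
  by (cases d) (simp_all add: vnorm_def vinner_def sum.lessThan_Suc_shift)

lemma vnorm_coeff_pos: "p \<noteq> 0 \<Longrightarrow> degree p < d \<Longrightarrow> 0 < vnorm d (coeff p)"
  using vnorm_pos[of "degree p" d "coeff p"] by simp

lemma vnorm_powers_pos: "0 < d \<Longrightarrow> 0 < vnorm d (\<lambda>l. x ^ l)"
  using vnorm_pos[of 0 d "\<lambda>l. x ^ l"] by simp

lemma rd_embedding_of_polys:
  fixes p :: "nat \<Rightarrow> real poly" and t :: "nat \<Rightarrow> real"
  assumes "0 < d" "0 < c"
    and nonzero: "\<And>j. j < N \<Longrightarrow> p j \<noteq> 0"
    and degree: "\<And>j. j < N \<Longrightarrow> degree (p j) < d"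
    and on_ones: "\<And>j i. j < N \<Longrightarrow> i < n \<Longrightarrow> A j i = 1 \<Longrightarrow> c \<le> poly (p j) (t i)"
    and on_zeros: "\<And>j i. j < N \<Longrightarrow> i < n \<Longrightarrow> A j i = 0 \<Longrightarrow> poly (p j) (t i) \<le> - c"
    and norms: "\<And>j i. j < N \<Longrightarrow> i < n \<Longrightarrow> vnorm d (coeff (p j)) * vnorm d (\<lambda>l. t i ^ l) \<le> B"
  shows "rd_embedding d N n A (c / B)
           (\<lambda>j. vnormalize d (coeff (p j))) (\<lambda>i. vnormalize d (\<lambda>l. t i ^ l))"
  unfolding rd_embedding_def
proof (intro conjI allI impI)
  fix j i assume ji: "j < N" "i < n"
  let ?D = "vnorm d (coeff (p j)) * vnorm d (\<lambda>l. t i ^ l)"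
  have "0 < ?D"
    using vnorm_coeff_pos[OF nonzero degree] vnorm_powers_pos[OF \<open>0 < d\<close>] ji by simp
  then have margin: "c / B \<le> c / ?D"
    using norms[OF ji] \<open>0 < c\<close> by (intro divide_left_mono) (auto intro: mult_pos_pos)
  have inner: "vinner d (vnormalize d (coeff (p j))) (vnormalize d (\<lambda>l. t i ^ l))
      = poly (p j) (t i) / ?D"
    by (simp add: vinner_vnormalize vinner_coeff_powers degree ji)
  show "c / B \<le> vinner d (vnormalize d (coeff (p j))) (vnormalize d (\<lambda>l. t i ^ l))"
    if "A j i = 1"
    using margin divide_right_mono[OF on_ones[OF ji that], of ?D] \<open>0 < ?D\<close>
    by (simp add: inner)
  show "vinner d (vnormalize d (coeff (p j))) (vnormalize d (\<lambda>l. t i ^ l)) \<le> - (c / B)"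
    if "A j i = 0"
    using margin divide_right_mono[OF on_zeros[OF ji that], of ?D] \<open>0 < ?D\<close>
    by (simp add: inner)
qed (use vnorm_coeff_pos[OF nonzero degree] vnorm_powers_pos[OF \<open>0 < d\<close>] in
      \<open>auto intro: unit_vec_vnormalize\<close>)

lemma mrd_ge_of_rd_embedding:
  assumes "rd_embedding d N n A m U V" "0 \<le> m"
  shows "ereal m \<le> mrd d N n A"
proof -
  have "m \<in> margins_rd d N n A"
    using assms unfolding margins_rd_def by auto
  then show ?thesis
    unfolding mrd_def by (auto intro: Sup_upper)
qed

lemma mrd_one_column_ge_1:
  assumes "0 < d"
  shows "1 \<le> mrd d N 1 A"
proof -
  define p where "p j = [:if A j 0 = 1 then 1 else -1 :: real:]" for j
  have "rd_embedding d N 1 A (1 / 1)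
          (\<lambda>j. vnormalize d (coeff (p j))) (\<lambda>_. vnormalize d (\<lambda>l. 0 ^ l))"
    using assms
    by (intro rd_embedding_of_polys[where t = "\<lambda>_. 0"])
      (auto simp: p_def vnorm_coeff_const vnorm_powers_zero)
  then show ?thesis
    using mrd_ge_of_rd_embedding by (fastforce simp: one_ereal_def)
qed

lemma abs_poly_prod_linear_ge:
  fixes t :: "'a \<Rightarrow> 'b::linordered_idom"
  assumes "0 \<le> \<delta>" "\<And>a. a \<in> S \<Longrightarrow> \<delta> \<le> \<bar>x - t a\<bar>"
  shows "\<delta> ^ card S \<le> \<bar>poly (\<Prod>a\<in>S. [:- t a, 1:]) x\<bar>"
proof -
  have "\<delta> ^ card S = (\<Prod>a\<in>S. \<delta>)"
    by simp
  also have "\<dots> \<le> (\<Prod>a\<in>S. \<bar>x - t a\<bar>)"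
    using assms by (intro prod_mono) auto
  finally show ?thesis
    by (simp add: poly_prod abs_prod)
qed

lemma poly_l1_norm_prod_linear_le:
  fixes t :: "'a \<Rightarrow> 'b::linordered_idom"
  assumes "\<And>a. a \<in> S \<Longrightarrow> \<bar>t a\<bar> \<le> 1"
  shows "poly_l1_norm (\<Prod>a\<in>S. [:- t a, 1:]) \<le> 2 ^ card S"
proof -
  have "poly_l1_norm (\<Prod>a\<in>S. [:- t a, 1:]) \<le> (\<Prod>a\<in>S. poly_l1_norm [:- t a, 1:])"
    by (rule poly_l1_norm_prod_le)
  also have "\<dots> \<le> (\<Prod>a\<in>S. 2)"
    using assms by (intro prod_mono) (auto simp: add_nonneg_nonneg)
  finally show ?thesis
    by simp
qed

definition sep_poly :: "'b::comm_ring_1 \<Rightarrow> ('a \<Rightarrow> 'b) \<Rightarrow> 'a set \<Rightarrow> 'b poly" where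
  "sep_poly c t S = [:c:] - (\<Prod>a\<in>S. [:- t a, 1:]) ^ 2"

lemma degree_sep_poly_le: "degree (sep_poly c t S) \<le> 2 * card S"
proof -
  have "degree (\<Prod>a\<in>S. [:- t a, 1:]) \<le> card S"
    using degree_prod_sum_le[of S "\<lambda>a. [:- t a, 1:]"] by (cases "finite S") auto
  then have "degree ((\<Prod>a\<in>S. [:- t a, 1:]) ^ 2) \<le> 2 * card S"
    using degree_power_le[of "\<Prod>a\<in>S. [:- t a, 1:]" 2] by linarith
  then show ?thesis
    unfolding sep_poly_def by (intro degree_diff_le) auto
qed

lemma poly_sep_poly_on:
  assumes "finite S" "a \<in> S"
  shows "poly (sep_poly c t S) (t a) = c"
proof -
  have "poly (\<Prod>b\<in>S. [:- t b, 1:]) (t a) = 0"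
    using assms by (auto simp: poly_prod intro!: prod_zero bexI[of _ a])
  then show ?thesis
    by (simp add: sep_poly_def)
qed

lemma poly_sep_poly_off:
  fixes t :: "'a \<Rightarrow> 'b::linordered_idom"
  assumes "0 \<le> \<delta>" "\<And>a. a \<in> S \<Longrightarrow> \<delta> \<le> \<bar>x - t a\<bar>" "2 * c \<le> (\<delta> ^ card S)\<^sup>2"
  shows "poly (sep_poly c t S) x \<le> - c"
proof -
  have "\<delta> ^ card S \<le> \<bar>poly (\<Prod>a\<in>S. [:- t a, 1:]) x\<bar>"
    using assms by (intro abs_poly_prod_linear_ge)
  then have "(\<delta> ^ card S)\<^sup>2 \<le> \<bar>poly (\<Prod>a\<in>S. [:- t a, 1:]) x\<bar>\<^sup>2"
    using assms(1) by (intro power_mono) auto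
  then show ?thesis
    using assms(3) by (simp add: sep_poly_def)
qed

lemma poly_l1_norm_sep_poly_le:
  fixes t :: "'a \<Rightarrow> 'b::linordered_idom"
  assumes "\<And>a. a \<in> S \<Longrightarrow> \<bar>t a\<bar> \<le> 1"
  shows "poly_l1_norm (sep_poly c t S) \<le> \<bar>c\<bar> + 4 ^ card S"
proof -
  let ?q = "\<Prod>a\<in>S. [:- t a, 1:]"
  have "poly_l1_norm (sep_poly c t S) \<le> \<bar>c\<bar> + poly_l1_norm ?q * poly_l1_norm ?q"
    using poly_l1_norm_diff_le[of "[:c:]" "?q * ?q"] poly_l1_norm_mult_le[of ?q ?q]
    by (simp add: sep_poly_def power2_eq_square)
  also have "\<dots> \<le> \<bar>c\<bar> + 2 ^ card S * 2 ^ card S"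
    using poly_l1_norm_prod_linear_le[OF assms] poly_l1_norm_nonneg[of ?q]
    by (intro add_left_mono mult_mono) auto
  finally show ?thesis
    by (simp flip: power_mult_distrib)
qed

definition grid_point :: "nat \<Rightarrow> nat \<Rightarrow> real" where
  "grid_point n i = -1 + 2 * real i / real n"

lemma abs_grid_point_le: "i \<le> n \<Longrightarrow> \<bar>grid_point n i\<bar> \<le> 1"
  by (cases "n = 0") (auto simp: grid_point_def field_simps)

lemma grid_point_dist_ge:
  assumes "i \<noteq> a"
  shows "2 / real n \<le> \<bar>grid_point n i - grid_point n a\<bar>"
proof -
  have "grid_point n i - grid_point n a = 2 * (real i - real a) / real n"
    by (simp add: grid_point_def diff_divide_distrib)
  then have "\<bar>grid_point n i - grid_point n a\<bar> = 2 * \<bar>real i - real a\<bar> / real n"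
    by (simp only: abs_divide abs_mult abs_numeral abs_of_nat)
  moreover have "1 \<le> \<bar>real i - real a\<bar>"
    using assms by linarith
  ultimately show ?thesis
    by (simp add: divide_right_mono)
qed

lemma nine_sqrt_odd_le_pow4:
  assumes "1 \<le> k"
  shows "9 * sqrt (2 * real k + 1) \<le> 4 * 4 ^ k"
proof -
  have "81 * (2 * k + 1) \<le> 16 * (16::nat) ^ k"
    using assms by (induction k rule: dec_induct) auto
  then have "real (81 * (2 * k + 1)) \<le> real (16 * 16 ^ k)"
    by (simp only: of_nat_le_iff)
  then have "81 * (2 * real k + 1) \<le> 16 * 16 ^ k"
    by simp
  then have "(9 * sqrt (2 * real k + 1))\<^sup>2 \<le> (4 * 4 ^ k)\<^sup>2"
    by (simp add: power_mult_distrib power2_eq_square flip: power_mult_distrib)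
  then show ?thesis
    by (rule power2_le_imp_le) simp
qed

lemma inverse_pow_le_grid_margin:
  assumes "2 \<le> n" "1 \<le> k"
  defines "c \<equiv> (2 / real n) ^ (2 * k) / 2"
  shows "1 / (2 * real n) ^ (2 * k) \<le> c / ((c + 4 ^ k) * sqrt (2 * real k + 1))"
proof -
  have "0 < c" "c \<le> 1 / 2"
    using assms(1) by (auto simp: c_def power_le_one)
  moreover have "4 \<le> (4::real) ^ k"
    using power_increasing[OF assms(2), of "4::real"] by simp
  ultimately have "(c + 4 ^ k) * sqrt (2 * real k + 1) \<le> (9 / 8 * 4 ^ k) * (4 / 9 * 4 ^ k)"
    using nine_sqrt_odd_le_pow4[OF assms(2)] by (intro mult_mono) auto
  also have "\<dots> = 16 ^ k / 2"
    by (simp flip: power_mult_distrib)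
  finally have "c / (16 ^ k / 2) \<le> c / ((c + 4 ^ k) * sqrt (2 * real k + 1))"
    using \<open>0 < c\<close> by (intro frac_le mult_pos_pos add_pos_pos) auto
  moreover have "1 / (2 * real n) = (2 / real n) / 4"
    by simp
  then have "1 / (2 * real n) ^ (2 * k) = (2 / real n) ^ (2 * k) / 4 ^ (2 * k)"
    by (metis power_divide power_one_over)
  then have "1 / (2 * real n) ^ (2 * k) = c / (16 ^ k / 2)"
    by (simp add: c_def power_mult)
  ultimately show ?thesis
    by simp
qed

lemma mrd_ge_grid_margin:
  fixes N n k :: nat and A :: "nat \<Rightarrow> nat \<Rightarrow> int" and c :: real
  assumes "2 \<le> n" "0 < c" "2 * c \<le> (2 / real n) ^ (2 * k)"
    and sparse: "\<forall>j<N. card {i. i < n \<and> A j i \<noteq> 0} \<le> k"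
  shows "ereal (c / ((c + 4 ^ k) * sqrt (2 * real k + 1))) \<le> mrd (2 * k + 1) N n A"
proof -
  define S where "S j = {i. i < n \<and> A j i \<noteq> 0}" for j
  define p where "p j = sep_poly c (grid_point n) (S j)" for j
  have "finite (S j)" for j
    by (simp add: S_def)
  have card_S: "card (S j) \<le> k" if "j < N" for j
    using sparse that by (simp add: S_def)
  have grid_S: "\<bar>grid_point n a\<bar> \<le> 1" if "a \<in> S j" for a j
    using that by (simp add: S_def abs_grid_point_le)
  have degree_p: "degree (p j) < 2 * k + 1" if "j < N" for j
    using degree_sep_poly_le[of c "grid_point n" "S j"] card_S[OF that] by (simp add: p_def)
  have on_support: "poly (p j) (grid_point n i) = c" if "i \<in> S j" for i j
    using poly_sep_poly_on[OF \<open>finite (S j)\<close> that] by (simp add: p_def)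
  have off_support: "poly (p j) (grid_point n i) \<le> - c" if "j < N" "i \<notin> S j" for i j
    unfolding p_def
  proof (rule poly_sep_poly_off)
    show "2 / real n \<le> \<bar>grid_point n i - grid_point n a\<bar>" if "a \<in> S j" for a
      using that \<open>i \<notin> S j\<close> by (intro grid_point_dist_ge) auto
    have "(2 / real n) ^ k \<le> (2 / real n) ^ card (S j)"
      using card_S[OF that(1)] assms(1) by (intro power_decreasing) auto
    then have "((2 / real n) ^ k)\<^sup>2 \<le> ((2 / real n) ^ card (S j))\<^sup>2"
      by (intro power_mono) auto
    moreover have "(2 / real n) ^ (2 * k) = ((2 / real n) ^ k)\<^sup>2"
      by (simp add: mult.commute flip: power_mult)
    ultimately show "2 * c \<le> ((2 / real n) ^ card (S j))\<^sup>2"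
      using assms(3) by linarith
  qed simp
  have norms: "vnorm (2 * k + 1) (coeff (p j)) * vnorm (2 * k + 1) (\<lambda>l. grid_point n i ^ l)
      \<le> (c + 4 ^ k) * sqrt (2 * real k + 1)" if "j < N" "i < n" for i j
  proof (rule mult_mono)
    have "poly_l1_norm (p j) \<le> c + 4 ^ card (S j)"
      using poly_l1_norm_sep_poly_le[of "S j" "grid_point n" c, OF grid_S] \<open>0 < c\<close>
      by (simp add: p_def)
    also have "\<dots> \<le> c + 4 ^ k"
      using card_S[OF that(1)] by (simp add: power_increasing)
    finally show "vnorm (2 * k + 1) (coeff (p j)) \<le> c + 4 ^ k"
      using vnorm_coeff_le_poly_l1_norm[OF degree_p[OF that(1)]] by simp
    show "vnorm (2 * k + 1) (\<lambda>l. grid_point n i ^ l) \<le> sqrt (2 * real k + 1)"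
      using vnorm_powers_le[of "grid_point n i" "2 * k + 1"] abs_grid_point_le that(2)
      by (simp add: ac_simps)
  qed (use \<open>0 < c\<close> in simp_all)
  have nonzero: "p j \<noteq> 0" if "j < N" for j
    using on_support[of 0 j] off_support[OF that, of 0] \<open>0 < c\<close> by fastforce
  have "rd_embedding (2 * k + 1) N n A (c / ((c + 4 ^ k) * sqrt (2 * real k + 1)))
          (\<lambda>j. vnormalize (2 * k + 1) (coeff (p j)))
          (\<lambda>i. vnormalize (2 * k + 1) (\<lambda>l. grid_point n i ^ l))"
    using \<open>0 < c\<close> nonzero degree_p norms on_support off_support
    by (intro rd_embedding_of_polys) (auto simp: S_def)
  then show ?thesis
    using \<open>0 < c\<close> by (intro mrd_ge_of_rd_embedding) auto
qed

lemma mrd_sparse_rows_ge: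
  fixes N n k :: nat and A :: "nat \<Rightarrow> nat \<Rightarrow> int"
  assumes "2 \<le> n" "1 \<le> k"
    and "\<forall>j<N. card {i. i < n \<and> A j i \<noteq> 0} \<le> k"
  shows "ereal (1 / (2 * real n) ^ (2 * k)) \<le> mrd (2 * k + 1) N n A"
proof -
  define c :: real where "c = (2 / real n) ^ (2 * k) / 2"
  have "ereal (1 / (2 * real n) ^ (2 * k)) \<le> ereal (c / ((c + 4 ^ k) * sqrt (2 * real k + 1)))"
    using inverse_pow_le_grid_margin[OF assms(1,2)] by (simp add: c_def)
  also have "\<dots> \<le> mrd (2 * k + 1) N n A"
    using assms by (intro mrd_ge_grid_margin) (auto simp: c_def)
  finally show ?thesis .
qed

theorem corollary1p2:
  fixes N n k :: nat and A :: "nat \<Rightarrow> nat \<Rightarrow> int"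
  assumes "n \<ge> 1" and "k \<ge> 1"
    and "\<forall>j<N. \<forall>i<n. A j i \<in> {0, 1}"
    and "\<forall>j<N. card {i. i < n \<and> A j i \<noteq> 0} \<le> k"
  shows "mrd (2 * k + 1) N n A \<ge>
           ereal ((2 * real n) powr (- (2 * real k)) * (2 * real k) powr (- 1 / 4))"
proof -
  have "(2 * real n) powr (- (2 * real k)) = 1 / (2 * real n) ^ (2 * k)"
    using assms(1) powr_realpow[of "2 * real n" "2 * k"] by (simp add: powr_minus_divide)
  moreover have "(2 * real k) powr (- 1 / 4) \<le> (2 * real k) powr 0"
    using assms(2) by (intro powr_mono) auto
  then have "(2 * real k) powr (- 1 / 4) \<le> 1"
    using assms(2) by simp
  ultimately have "(2 * real n) powr (- (2 * real k)) * (2 * real k) powr (- 1 / 4)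
      \<le> 1 / (2 * real n) ^ (2 * k)"
    by (simp only:) (rule mult_left_le, simp_all)
  moreover have "ereal (1 / (2 * real n) ^ (2 * k)) \<le> mrd (2 * k + 1) N n A"
  proof (cases "n = 1")
    case True
    have "ereal (1 / 2 ^ (2 * k)) \<le> 1"
      by (simp add: one_ereal_def)
    also have "1 \<le> mrd (2 * k + 1) N 1 A"
      by (rule mrd_one_column_ge_1) simp
    finally show ?thesis
      using True by simp
  next
    case False
    then show ?thesis
      using mrd_sparse_rows_ge assms(1,2,4) by simp
  qed
  ultimately show ?thesis
    by (meson ereal_less_eq(3) order_trans)
qed

end
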